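(* Let $L\ge 2$ and $d_0,d_1,\dots,d_{L-1}\in\mathbb{N}^+$, $d_L=1$. Let $\mathcal{B}_M=\langle \mathbf{W}_k\rangle_{k=1}^L$ with $\mathbf{W}_k\in\mathbb{R}^{d_k\times d_{k-1}}$ be the mean parameters of an aggregation of BAMs $\mathcal{A}(\mathcal{B}_M)$ (defined in the context). For $k\in\{1,\dots,L\}$ let $R_k=\{-1,1\}^{d_k}$. For $x\in\mathbb{R}^{d_0}$, $x\neq 0$, define the vector $\mathbf{P}_1(x)\in[0,1]^{2^{d_1}}$, indexed by $s\in R_1$, by $$\mathbf{P}_1(x)[s]=\prod_{i=1}^{d_1}\Big(\tfrac12+\tfrac{s^i}{2}\,\mathrm{Erf}\Big(\tfrac{\mathbf{W}_1^i\cdot x}{\sqrt2\,\|x\|}\Big)\Big),$$ and for $k\in\{2,\dots,L\}$ define the matrix $\mathbf{\Psi}_k\in[0,1]^{2^{d_k}\times 2^{d_{k-1}}}$, with rows indexed by $s\in R_k$ and columns by $\bar s\in R_{k-1}$, by $$\mathbf{\Psi}_k[s,\bar s]=\prod_{i=1}^{d_k}\Big(\tfrac12+\tfrac{s^i}{2}\,\mathrm{Erf}\Big(\tfrac{\mathbf{W}_k^i\cdot \bar s}{\sqrt{2d_{k-1}}}\Big)\Big),$$ where $\mathbf{W}_k^i$ is the $i$-th row of $\mathbf{W}_k$ and $s^i$ the $i$-th coordinate of $s$. Let $\mathbf{u}$ be the row vector indexed by $R_L=\{-1,1\}$ with $\mathbf{u}[1]=1$ and $\mathbf{u}[-1]=-1$,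 and set $$\mathbf{H}=\mathbf{u}\cdot\mathbf{\Psi}_L\cdot\mathbf{\Psi}_{L-1}\cdots\mathbf{\Psi}_3\cdot\mathbf{\Psi}_2 .$$ Then $\mathbf{P}_1(x)$ is a probability distribution on $R_1$, equal to the distribution of the leading hidden layer output $F^1_{\mathcal{B}}(x)$ for $\mathcal{B}\sim\mathcal{A}(\mathcal{B}_M)$; $\mathbf{H}\in[-1,1]^{2^{d_1}}$, its entry indexed by $s\in R_1$ being the expected output $\mathbb{E}_{\mathcal{B}\sim\mathcal{A}(\mathcal{B}_M)}[F_{\mathcal{B}}(x)\mid F^1_{\mathcal{B}}(x)=s]$ of the rest of the network given the leading hidden layer output $s$; and for every $x\ne0$, $$F_{\mathcal{A}(\mathcal{B}_M)}(x)=\mathbf{H}\cdot\mathbf{P}_1(x).$$ In particular, $F_{\mathcal{A}(\mathcal{B}_M)}$ is computed by a network with a single hidden layer of width $2^{d_1}$ (built from $\mathrm{Erf}$ of linear functions of $x/\|x\|$) followed by one output neuron with identity activation and weight vector $\mathbf{H}$, which does not depend on $x$.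
   Context: $\mathrm{sgn}(t)=-1$ if $t<0$ and $+1$ otherwise, applied element-wise to vectors. $\mathrm{Erf}(t)=\frac{2}{\sqrt\pi}\int_0^t e^{-u^2}du$. A binary activated multilayer network (BAM) with architecture $\langle d_k\rangle_{k=0}^L$ (biases omitted / absorbed into the weights) is a tuple $\mathcal{B}=\langle \mathbf{V}_k\rangle_{k=1}^L$, $\mathbf{V}_k\in\mathbb{R}^{d_k\times d_{k-1}}$, computing $F^1_{\mathcal{B}}(x)=\mathrm{sgn}(\mathbf{V}_1x)$, $F^k_{\mathcal{B}}(x)=\mathrm{sgn}(\mathbf{V}_kF^{k-1}_{\mathcal{B}}(x))$ for $k\ge2$, and $F_{\mathcal{B}}(x)=F^L_{\mathcal{B}}(x)\in\{-1,1\}$ (since $d_L=1$). The aggregation of BAMs $\mathcal{A}(\mathcal{B}_M)$ with mean parameters $\mathcal{B}_M=\langle\mathbf{W}_k\rangle_{k=1}^L$ is the distribution over BAMs in which all entries of all $\mathbf{V}_k$ are independent with $(\mathbf{V}_k)_{ij}\sim\mathcal{N}((\mathbf{W}_k)_{ij},1)$ (isotropic Gaussian with identity covariance centered at $\mathcal{B}_M$). Its output is $F_{\mathcal{A}(\mathcal{B}_M)}(x)=\mathbb{E}_{\mathcal{B}\sim\mathcal{A}(\mathcal{B}_M)}F_{\mathcal{B}}(x)=\Pr(F_{\mathcal{B}}(x)=1)-\Pr(F_{\mathcal{B}}(x)=-1)$. *)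

theory Defs
  imports "HOL-Probability.Probability"
begin

text \<open>Vectors of R^n are functions nat \<Rightarrow> real, only coordinates i < n matter.
 Mean parameters: W k i j = (W_k)_{ij}, for 1 \<le> k \<le> L, i < d k, j < d (k-1)
 (indices are 0-based). A BAM is V :: nat \<times> nat \<times> nat \<Rightarrow> real, V (k,i,j) = (V_k)_{ij}.\<close>

definition bsgn :: "real \<Rightarrow> real" where
  "bsgn t = (if t < 0 then -1 else 1)"

definition Erf :: "real \<Rightarrow> real" where
  "Erf t = 2 / sqrt pi * (LBINT u=ereal 0..ereal t. exp (-(u\<^sup>2)))"

definition bam_index :: "nat \<Rightarrow> (nat \<Rightarrow> nat) \<Rightarrow> (nat \<times> nat \<times> nat) set" where
  "bam_index L d = {(k,i,j). 1 \<le> k \<and> k \<le> L \<and> i < d k \<and> j < d (k - 1)}"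

definition aggr :: "nat \<Rightarrow> (nat \<Rightarrow> nat) \<Rightarrow> (nat \<Rightarrow> nat \<Rightarrow> nat \<Rightarrow> real)
    \<Rightarrow> (nat \<times> nat \<times> nat \<Rightarrow> real) measure" where
  "aggr L d W = PiM (bam_index L d)
      (\<lambda>(k,i,j). density lborel (\<lambda>v. ennreal (normal_density (W k i j) 1 v)))"

fun layer :: "(nat \<times> nat \<times> nat \<Rightarrow> real) \<Rightarrow> (nat \<Rightarrow> nat) \<Rightarrow> nat \<Rightarrow> (nat \<Rightarrow> real) \<Rightarrow> (nat \<Rightarrow> real)" where
  "layer V d 0 x = x"
| "layer V d (Suc k) x = (\<lambda>i. bsgn (\<Sum>j<d k. V (Suc k, i, j) * layer V d k x j))"

definition bam_out :: "(nat \<times> nat \<times> nat \<Rightarrow> real) \<Rightarrow> nat \<Rightarrow> (nat \<Rightarrow> nat) \<Rightarrow> (nat \<Rightarrow> real) \<Rightarrow> real" where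
  "bam_out V L d x = layer V d L x 0"

definition aggr_out :: "nat \<Rightarrow> (nat \<Rightarrow> nat) \<Rightarrow> (nat \<Rightarrow> nat \<Rightarrow> nat \<Rightarrow> real) \<Rightarrow> (nat \<Rightarrow> real) \<Rightarrow> real" where
  "aggr_out L d W x = (\<integral>V. bam_out V L d x \<partial>aggr L d W)"

definition Rset :: "(nat \<Rightarrow> nat) \<Rightarrow> nat \<Rightarrow> (nat \<Rightarrow> real) set" where
  "Rset d k = {s. (\<forall>i<d k. s i = -1 \<or> s i = 1) \<and> (\<forall>i. d k \<le> i \<longrightarrow> s i = 0)}"

definition vnorm :: "nat \<Rightarrow> (nat \<Rightarrow> real) \<Rightarrow> real" where
  "vnorm n x = sqrt (\<Sum>j<n. (x j)\<^sup>2)"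

definition P1 :: "(nat \<Rightarrow> nat) \<Rightarrow> (nat \<Rightarrow> nat \<Rightarrow> nat \<Rightarrow> real) \<Rightarrow> (nat \<Rightarrow> real) \<Rightarrow> (nat \<Rightarrow> real) \<Rightarrow> real" where
  "P1 d W x s = (\<Prod>i<d 1. (1/2 + s i / 2 *
       Erf ((\<Sum>j<d 0. W 1 i j * x j) / (sqrt 2 * vnorm (d 0) x))))"

definition Psi :: "(nat \<Rightarrow> nat) \<Rightarrow> (nat \<Rightarrow> nat \<Rightarrow> nat \<Rightarrow> real) \<Rightarrow> nat \<Rightarrow> (nat \<Rightarrow> real) \<Rightarrow> (nat \<Rightarrow> real) \<Rightarrow> real" where
  "Psi d W k s sb = (\<Prod>i<d k. (1/2 + s i / 2 *
       Erf ((\<Sum>j<d (k - 1). W k i j * sb j) / sqrt (2 * real (d (k - 1))))))"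

text \<open>hrow d W L n is the row vector u \<cdot> Psi_L \<cdots> Psi_{L-n+1}, indexed by R_{L-n}.
 u s = s 0 (u[1] = 1, u[-1] = -1).\<close>
fun hrow :: "(nat \<Rightarrow> nat) \<Rightarrow> (nat \<Rightarrow> nat \<Rightarrow> nat \<Rightarrow> real) \<Rightarrow> nat \<Rightarrow> nat \<Rightarrow> (nat \<Rightarrow> real) \<Rightarrow> real" where
  "hrow d W L 0 = (\<lambda>s. s 0)"
| "hrow d W L (Suc n) = (\<lambda>sb. \<Sum>s\<in>Rset d (L - n). hrow d W L n s * Psi d W (L - n) s sb)"

definition Hvec :: "nat \<Rightarrow> (nat \<Rightarrow> nat) \<Rightarrow> (nat \<Rightarrow> nat \<Rightarrow> nat \<Rightarrow> real) \<Rightarrow> (nat \<Rightarrow> real) \<Rightarrow> real" where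
  "Hvec L d W = hrow d W L (L - 1)"

end

theory Submission
  imports Defs
begin

text \<open>Given the output \<open>s\<close> of layer \<open>k - 1\<close>, the rows of \<open>V\<^sub>k\<close> are independent Gaussian
  vectors, so the neurons of layer \<open>k\<close> output \<open>1\<close> independently, neuron \<open>i\<close> with probability
  \<open>(1 + Erf (W\<^sub>k\<^sup>i \<cdot> s / (sqrt 2 * \<parallel>s\<parallel>))) / 2\<close>. For \<open>k = 1\<close> this gives \<open>P\<^sub>1\<close>, and for
  \<open>k \<ge> 2\<close> the transition matrix \<open>\<Psi>\<^sub>k\<close> of a Markov chain formed by the layer outputs. Hence the
  expected network output on the event \<open>F\<^sup>1 = s\<close> is obtained by pulling \<open>u\<close> back through
  \<open>\<Psi>\<^sub>L, \<dots>, \<Psi>\<^sub>2\<close>, which yields \<open>H[s] \<cdot> P\<^sub>1[s]\<close>.\<close>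

section \<open>The error function\<close>

lemma exp_neg_square_eq_normal_density:
  "exp (- (u::real)\<^sup>2) = sqrt pi * normal_density 0 (sqrt (1/2)) u"
  by (simp add: normal_density_def real_sqrt_divide power_divide real_sqrt_mult)

lemma integrable_exp_neg_square: "integrable lborel (\<lambda>u::real. exp (- u\<^sup>2))"
  unfolding exp_neg_square_eq_normal_density by simp

lemma set_integrable_exp_neg_square:
  "A \<in> sets borel \<Longrightarrow> set_integrable lborel A (\<lambda>u::real. exp (- u\<^sup>2))"
  unfolding set_integrable_def by (intro integrable_mult_indicator integrable_exp_neg_square) simp

lemma interval_integral_exp_neg_square_0_infty:
  "(LBINT u=0..\<infinity>. exp (- u\<^sup>2)) = sqrt pi / 2"
proof -
  have "(LBINT u=0..\<infinity>. exp (- u\<^sup>2)) = (LBINT u:{0<..}. exp (- u\<^sup>2))"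
    by (rule interval_lebesgue_integral_0_infty)
  also have "\<dots> = (LBINT u:{0..}. exp (- u\<^sup>2))"
    by (rule set_integral_discrete_difference[where X="{0}"]) auto
  also have "\<dots> = sqrt pi / 2"
    using gaussian_moment_0 unfolding set_lebesgue_integral_def
    by (rule has_bochner_integral_integral_eq)
  finally show ?thesis .
qed

lemma set_integral_exp_neg_square_lessThan:
  "(LBINT u:{..<-a}. exp (- u\<^sup>2)) = sqrt pi / 2 * (1 - Erf a)"
proof -
  have "(LBINT u:{..<-a}. exp (- u\<^sup>2)) = (LBINT u=-\<infinity>..ereal (-a). exp (- u\<^sup>2))"
    by (simp add: interval_lebesgue_integral_le_eq)
  also have "\<dots> = (LBINT u=ereal a..\<infinity>. exp (- u\<^sup>2))"
    by (subst interval_integral_reflect) simp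
  also have "\<dots> = (LBINT u=0..\<infinity>. exp (- u\<^sup>2)) - (LBINT u=ereal 0..ereal a. exp (- u\<^sup>2))"
    using interval_integral_sum[of 0 "ereal a" \<infinity> "\<lambda>u. exp (- u\<^sup>2)"]
    by (simp add: interval_lebesgue_integrable_def set_integrable_exp_neg_square zero_ereal_def)
  finally show ?thesis
    by (simp add: interval_integral_exp_neg_square_0_infty Erf_def right_diff_distrib)
qed

lemma set_integral_exp_neg_square_lessThan_pos: "0 < (LBINT u:{..<b::real}. exp (- u\<^sup>2))"
proof -
  have integrable: "integrable lborel (\<lambda>u. indicator {..<b} u * exp (- u\<^sup>2))"
    using set_integrable_exp_neg_square[of "{..<b}"] by (simp add: set_integrable_def)
  have "(LBINT u:{..<b}. exp (- u\<^sup>2)) \<noteq> 0"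
  proof
    assume "(LBINT u:{..<b}. exp (- u\<^sup>2)) = 0"
    then have "AE u in lborel. indicator {..<b} u * exp (- u\<^sup>2) = (0::real)"
      using integrable by (simp add: set_lebesgue_integral_def integral_nonneg_eq_0_iff_AE)
    then have "AE u in lborel. u \<notin> {..<b}"
      by (rule AE_mp) (auto simp: indicator_def)
    then have "emeasure lborel {..<b} = 0"
      by (subst (asm) AE_iff_measurable[where N="{..<b}"]) auto
    moreover have "emeasure lborel {b - 1..b - 1/2} \<le> emeasure lborel {..<b}"
      by (rule emeasure_mono) auto
    ultimately show False by simp
  qed
  moreover have "0 \<le> (LBINT u:{..<b}. exp (- u\<^sup>2))"
    unfolding set_lebesgue_integral_def by (rule Bochner_Integration.integral_nonneg) (simp add: indicator_def)
  ultimately show ?thesis by simp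
qed

lemma Erf_less_1: "Erf a < 1"
  using set_integral_exp_neg_square_lessThan_pos[of "-a"] set_integral_exp_neg_square_lessThan[of a]
  by (simp add: zero_less_mult_iff)

lemma Erf_minus: "Erf (- a) = - Erf a"
proof -
  have "(LBINT u=ereal 0..ereal (-a). exp (- u\<^sup>2)) = (LBINT u=ereal a..ereal 0. exp (- u\<^sup>2))"
    by (subst interval_integral_reflect) simp
  also have "\<dots> = - (LBINT u=ereal 0..ereal a. exp (- u\<^sup>2))"
    by (rule interval_integral_endpoints_reverse)
  finally show ?thesis unfolding Erf_def by simp
qed

lemma Erf_greater_minus_1: "-1 < Erf a"
  using Erf_less_1[of "-a"] by (simp add: Erf_minus)

lemma Erf_affine_pos: "sg = -1 \<or> sg = 1 \<Longrightarrow> 0 < 1/2 + sg/2 * Erf t"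
  using Erf_less_1[of t] Erf_greater_minus_1[of t] by auto

lemma nn_integral_normal_density_lessThan_0:
  fixes \<mu> \<sigma> :: real
  assumes "0 < \<sigma>"
  shows "(\<integral>\<^sup>+y. ennreal (normal_density \<mu> \<sigma> y) * indicator {..<0} y \<partial>lborel)
       = ennreal ((1 - Erf (\<mu> / (sqrt 2 * \<sigma>))) / 2)"
proof -
  define c where "c = sqrt 2 * \<sigma>"
  have c: "0 < c" using assms by (simp add: c_def)
  define a where "a = \<mu> / c"
  have rescaled_density: "c * normal_density \<mu> \<sigma> (\<mu> + c * u) = exp (- u\<^sup>2) / sqrt pi" for u
    using assms unfolding normal_density_def c_def
    by (simp add: power_mult_distrib real_sqrt_mult field_simps)
  have "(\<integral>\<^sup>+y. ennreal (normal_density \<mu> \<sigma> y) * indicator {..<0} y \<partial>lborel)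
      = ennreal \<bar>c\<bar> * (\<integral>\<^sup>+u. ennreal (normal_density \<mu> \<sigma> (\<mu> + c * u)) * indicator {..<0} (\<mu> + c * u) \<partial>lborel)"
    by (rule nn_integral_real_affine) (use c in auto)
  also have "\<dots> = (\<integral>\<^sup>+u. ennreal (exp (- u\<^sup>2) / sqrt pi) * indicator {..<-a} u \<partial>lborel)"
  proof (subst nn_integral_cmult[symmetric], simp, intro nn_integral_cong)
    fix u :: real
    have "indicator {..<0} (\<mu> + c * u) = (indicator {..<-a} u :: ennreal)"
      using c by (auto simp: indicator_def a_def field_simps)
    then show "ennreal \<bar>c\<bar> * (ennreal (normal_density \<mu> \<sigma> (\<mu> + c * u)) * indicator {..<0} (\<mu> + c * u))
        = ennreal (exp (- u\<^sup>2) / sqrt pi) * indicator {..<-a} u"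
      using c by (simp add: rescaled_density[symmetric] ennreal_mult'' mult.assoc)
  qed
  also have "\<dots> = ennreal ((LBINT u:{..<-a}. exp (- u\<^sup>2)) / sqrt pi)"
    using nn_set_integral_eq_set_integral[of lborel "\<lambda>u. exp (- u\<^sup>2) / sqrt pi" "{..<-a}"]
      integrable_exp_neg_square
    by (simp add: mult.commute set_integral_divide_zero set_integrable_def)
  finally show ?thesis
    by (simp add: set_integral_exp_neg_square_lessThan a_def c_def)
qed

section \<open>Products of Gaussian measures\<close>

lemma indep_vars_PiM_coordinates:
  fixes N :: "'i \<Rightarrow> 'a measure"
  assumes N: "\<And>p. prob_space (N p)" and I: "I \<noteq> {}"
  shows "prob_space.indep_vars (PiM I N) N (\<lambda>p \<omega>. \<omega> p) I"
proof -
  interpret P: prob_space "PiM I N" by (rule prob_space_PiM) (simp add: N)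
  have "distr (PiM I N) (PiM I N) (\<lambda>x. \<lambda>i\<in>I. x i) = distr (PiM I N) (PiM I N) (\<lambda>x. x)"
    by (rule distr_cong) (auto simp: space_PiM)
  also have "\<dots> = PiM I N"
    by simp
  also have "\<dots> = PiM I (\<lambda>i. distr (PiM I N) (N i) (\<lambda>\<omega>. \<omega> i))"
    by (rule PiM_cong) (simp_all add: distr_PiM_component N)
  finally show ?thesis
    by (subst P.indep_vars_iff_distr_eq_PiM'[OF I]) auto
qed

lemma measure_PiM_Inter_restrict:
  fixes N :: "'i \<Rightarrow> 'a measure" and G :: "'t \<Rightarrow> 'i set" and Q :: "'t \<Rightarrow> ('i \<Rightarrow> 'a) \<Rightarrow> bool"
  assumes N: "\<And>p. prob_space (N p)" and I: "I \<noteq> {}"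
    and T: "finite T" "T \<noteq> {}" and G: "\<And>t. t \<in> T \<Longrightarrow> G t \<subseteq> I" "disjoint_family_on G T"
    and Q: "\<And>t. t \<in> T \<Longrightarrow> {w \<in> space (PiM (G t) N). Q t w} \<in> sets (PiM (G t) N)"
  shows "measure (PiM I N) (\<Inter>t\<in>T. {\<omega> \<in> space (PiM I N). Q t (restrict \<omega> (G t))})
       = (\<Prod>t\<in>T. measure (PiM I N) {\<omega> \<in> space (PiM I N). Q t (restrict \<omega> (G t))})"
proof -
  interpret P: prob_space "PiM I N" by (rule prob_space_PiM) (simp add: N)
  have "P.indep_vars (\<lambda>t. PiM (G t) N) (\<lambda>t \<omega>. restrict (\<lambda>p. \<omega> p) (G t)) T"
    by (rule P.indep_vars_restrict[OF indep_vars_PiM_coordinates[OF N I]]) (use G in auto)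
  then have "P.indep_events (\<lambda>t. {\<omega> \<in> space (PiM I N). Q t (restrict (\<lambda>p. \<omega> p) (G t))}) T"
    by (rule P.indep_eventsI_indep_vars) (rule Q)
  then show ?thesis
    unfolding P.indep_events_def using T by auto
qed

definition gauss_factor :: "('i \<Rightarrow> real) \<Rightarrow> 'i \<Rightarrow> real measure" where
  "gauss_factor \<mu> p = density lborel (\<lambda>y. ennreal (normal_density (\<mu> p) 1 y))"

lemma prob_space_gauss_factor: "prob_space (gauss_factor \<mu> p)"
  unfolding gauss_factor_def by (rule prob_space_normal_density) simp

lemma sets_gauss_factor [simp]: "sets (gauss_factor \<mu> p) = sets borel"
  by (simp add: gauss_factor_def)

lemma prob_space_PiM_gauss_factor: "prob_space (PiM I (gauss_factor \<mu>))"
  by (intro prob_space_PiM prob_space_gauss_factor)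

lemma measurable_PiM_gauss_factor_coordinate [measurable]:
  "(\<lambda>\<omega>. \<omega> p) \<in> borel_measurable (PiM I (gauss_factor \<mu>))"
proof (cases "p \<in> I")
  case True
  then have "(\<lambda>\<omega>. \<omega> p) \<in> measurable (PiM I (gauss_factor \<mu>)) (gauss_factor \<mu> p)"
    by (rule measurable_component_singleton)
  then show ?thesis
    by (subst (asm) measurable_cong_sets[OF refl sets_gauss_factor])
next
  case False
  then have "\<omega> p = undefined" if "\<omega> \<in> space (PiM I (gauss_factor \<mu>))" for \<omega>
    using that by (auto simp: space_PiM intro: PiE_arb)
  then show ?thesis
    by (subst measurable_cong[where g="\<lambda>_. undefined"]) auto
qed

lemma distributed_PiM_gauss_factor_coordinate:
  assumes "p \<in> I"
  shows "distributed (PiM I (gauss_factor \<mu>)) lborel (\<lambda>\<omega>. \<omega> p) (\<lambda>y. ennreal (normal_density (\<mu> p) 1 y))"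
proof -
  have "distr (PiM I (gauss_factor \<mu>)) lborel (\<lambda>\<omega>. \<omega> p) = distr (PiM I (gauss_factor \<mu>)) (gauss_factor \<mu> p) (\<lambda>\<omega>. \<omega> p)"
    by (rule distr_cong) simp_all
  also have "\<dots> = gauss_factor \<mu> p"
    using assms by (intro distr_PiM_component prob_space_gauss_factor)
  finally show ?thesis
    unfolding distributed_def by (simp add: gauss_factor_def)
qed

lemma distributed_PiM_gauss_factor_linear_form:
  fixes r :: "nat \<Rightarrow> 'i" and v :: "nat \<Rightarrow> real"
  assumes r: "inj_on r {..<n}" "r ` {..<n} \<subseteq> I" and v: "\<exists>j<n. v j \<noteq> 0"
  shows "distributed (PiM I (gauss_factor \<mu>)) lborel (\<lambda>\<omega>. \<Sum>j<n. \<omega> (r j) * v j)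
     (\<lambda>y. ennreal (normal_density (\<Sum>j<n. \<mu> (r j) * v j) (sqrt (\<Sum>j<n. (v j)\<^sup>2)) y))"
proof -
  interpret P: prob_space "PiM I (gauss_factor \<mu>)" by (rule prob_space_PiM_gauss_factor)
  define J where "J = {j\<in>{..<n}. v j \<noteq> 0}"
  have J: "finite J" "J \<noteq> {}" using v by (auto simp: J_def)
  have "P.indep_vars (gauss_factor \<mu>) (\<lambda>p \<omega>. \<omega> p) I"
    using r v by (intro indep_vars_PiM_coordinates prob_space_gauss_factor) auto
  then have "P.indep_vars (\<lambda>j. PiM {r j} (gauss_factor \<mu>)) (\<lambda>j \<omega>. restrict (\<lambda>p. \<omega> p) {r j}) J"
    by (rule P.indep_vars_restrict) (use r in \<open>auto simp: J_def disjoint_family_on_def inj_on_def\<close>)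
  then have "P.indep_vars (\<lambda>j. borel) (\<lambda>j \<omega>. v j * restrict \<omega> {r j} (r j)) J"
    by (rule P.indep_vars_compose2) measurable
  then have indep: "P.indep_vars (\<lambda>j. borel) (\<lambda>j \<omega>. v j * \<omega> (r j)) J"
    by simp
  have "distributed (PiM I (gauss_factor \<mu>)) lborel (\<lambda>\<omega>. v j * \<omega> (r j))
      (\<lambda>y. ennreal (normal_density (v j * \<mu> (r j)) \<bar>v j\<bar> y))" if "j \<in> J" for j
    using P.normal_density_affine[OF distributed_PiM_gauss_factor_coordinate, of "r j" "v j" 0] r that
    by (auto simp: J_def)
  then have "distributed (PiM I (gauss_factor \<mu>)) lborel (\<lambda>\<omega>. \<Sum>j\<in>J. v j * \<omega> (r j))
     (\<lambda>y. ennreal (normal_density (\<Sum>j\<in>J. v j * \<mu> (r j)) (sqrt (\<Sum>j\<in>J. \<bar>v j\<bar>\<^sup>2)) y))"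
    by (intro P.sum_indep_normal[OF J indep]) (auto simp: J_def)
  moreover have "(\<Sum>j\<in>J. v j * f j) = (\<Sum>j<n. f j * v j)" for f :: "nat \<Rightarrow> real"
    by (rule sum.mono_neutral_cong_left) (auto simp: J_def)
  moreover have "(\<Sum>j\<in>J. \<bar>v j\<bar>\<^sup>2) = (\<Sum>j<n. (v j)\<^sup>2)"
    by (rule sum.mono_neutral_cong_left) (auto simp: J_def)
  ultimately show ?thesis
    by simp
qed

lemma measure_PiM_gauss_factor_bsgn_linear_form:
  fixes r :: "nat \<Rightarrow> 'i" and v :: "nat \<Rightarrow> real"
  assumes r: "inj_on r {..<n}" "r ` {..<n} \<subseteq> I" and v: "\<exists>j<n. v j \<noteq> 0"
    and sg: "sg = -1 \<or> sg = 1"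
  shows "measure (PiM I (gauss_factor \<mu>)) {\<omega> \<in> space (PiM I (gauss_factor \<mu>)). bsgn (\<Sum>j<n. \<omega> (r j) * v j) = sg}
       = 1/2 + sg/2 * Erf ((\<Sum>j<n. \<mu> (r j) * v j) / sqrt (2 * (\<Sum>j<n. (v j)\<^sup>2)))"
proof -
  let ?M = "PiM I (gauss_factor \<mu>)"
  let ?X = "\<lambda>\<omega>. \<Sum>j<n. \<omega> (r j) * v j"
  let ?e = "Erf ((\<Sum>j<n. \<mu> (r j) * v j) / sqrt (2 * (\<Sum>j<n. (v j)\<^sup>2)))"
  interpret P: prob_space ?M by (rule prob_space_PiM_gauss_factor)
  have "0 < (\<Sum>j<n. (v j)\<^sup>2)"
    using v by (auto intro!: sum_pos2)
  then have "emeasure ?M (?X -` {..<0} \<inter> space ?M) = ennreal ((1 - ?e) / 2)"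
    by (simp add: distributed_emeasure[OF distributed_PiM_gauss_factor_linear_form[OF r v]]
        nn_integral_normal_density_lessThan_0 real_sqrt_mult)
  moreover have "?X -` {..<0} \<inter> space ?M = {\<omega> \<in> space ?M. ?X \<omega> < 0}"
    by auto
  ultimately have neg: "measure ?M {\<omega> \<in> space ?M. ?X \<omega> < 0} = (1 - ?e) / 2"
    using Erf_less_1 by (simp add: measure_def less_imp_le)
  show ?thesis
  proof (cases "sg = 1")
    case True
    then have "{\<omega> \<in> space ?M. bsgn (?X \<omega>) = sg} = space ?M - {\<omega> \<in> space ?M. ?X \<omega> < 0}"
      by (auto simp: bsgn_def)
    then show ?thesis
      using True neg by (simp add: P.prob_compl)
  next
    case False
    then have "{\<omega> \<in> space ?M. bsgn (?X \<omega>) = sg} = {\<omega> \<in> space ?M. ?X \<omega> < 0}"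
      using sg by (auto simp: bsgn_def)
    then show ?thesis
      using False sg neg by auto
  qed
qed

section \<open>Layer outputs of a random network\<close>

lemma aggr_eq_PiM_gauss_factor:
  "aggr L d W = PiM (bam_index L d) (gauss_factor (\<lambda>(k, i, j). W k i j))"
  unfolding aggr_def gauss_factor_def by (rule PiM_cong) auto

lemma prob_space_aggr: "prob_space (aggr L d W)"
  unfolding aggr_eq_PiM_gauss_factor by (rule prob_space_PiM_gauss_factor)

lemma bsgn_cases: "bsgn t = -1 \<or> bsgn t = 1"
  by (simp add: bsgn_def)

lemma measurable_bsgn [measurable]: "bsgn \<in> borel_measurable borel"
  unfolding bsgn_def by measurable

lemma measurable_layer [measurable]:
  "(\<lambda>V. layer V d k x i) \<in> borel_measurable (PiM I (gauss_factor \<mu>))"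
  by (induction k arbitrary: i) simp_all

lemma layer_restrict_bam_index:
  assumes "k \<le> m" "i < d k"
  shows "layer (restrict V (bam_index m d)) d k x i = layer V d k x i"
  using assms
proof (induction k arbitrary: i)
  case (Suc k)
  have "restrict V (bam_index m d) (Suc k, i, j) = V (Suc k, i, j)" if "j < d k" for j
    using Suc.prems that by (simp add: bam_index_def)
  with Suc show ?case
    by simp
qed simp

lemma finite_Rset: "finite (Rset d m)"
proof (rule finite_subset)
  show "Rset d m \<subseteq> (\<lambda>f i. if i < d m then f i else 0) ` PiE {..<d m} (\<lambda>_. {-1, 1})"
  proof
    fix s assume "s \<in> Rset d m"
    then show "s \<in> (\<lambda>f i. if i < d m then f i else 0) ` PiE {..<d m} (\<lambda>_. {-1, 1})"
      by (intro image_eqI[of _ _ "restrict s {..<d m}"]) (auto simp: Rset_def fun_eq_iff)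
  qed
qed (intro finite_imageI finite_PiE; simp)

definition layer_vec :: "(nat \<times> nat \<times> nat \<Rightarrow> real) \<Rightarrow> (nat \<Rightarrow> nat) \<Rightarrow> (nat \<Rightarrow> real) \<Rightarrow> nat \<Rightarrow> nat \<Rightarrow> real" where
  "layer_vec V d x m = (\<lambda>i. if i < d m then layer V d m x i else 0)"

lemma layer_vec_in_Rset: "0 < m \<Longrightarrow> layer_vec V d x m \<in> Rset d m"
  using bsgn_cases by (cases m) (auto simp: layer_vec_def Rset_def)

lemma layer_eq_Rset_iff:
  "s \<in> Rset d m \<Longrightarrow> (\<forall>i<d m. layer V d m x i = s i) \<longleftrightarrow> s = layer_vec V d x m"
  by (auto simp: Rset_def layer_vec_def fun_eq_iff)

definition layer_event :: "nat \<Rightarrow> (nat \<Rightarrow> nat) \<Rightarrow> (nat \<Rightarrow> nat \<Rightarrow> nat \<Rightarrow> real) \<Rightarrow> (nat \<Rightarrow> real)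
    \<Rightarrow> nat \<Rightarrow> (nat \<Rightarrow> real) \<Rightarrow> (nat \<times> nat \<times> nat \<Rightarrow> real) set" where
  "layer_event L d W x m s = {V \<in> space (aggr L d W). \<forall>i<d m. layer V d m x i = s i}"

lemma sets_layer_event [measurable]: "layer_event L d W x m s \<in> sets (aggr L d W)"
  unfolding layer_event_def aggr_eq_PiM_gauss_factor by measurable

lemma sum_Rset_indicator_layer_event:
  assumes "0 < m" "V \<in> space (aggr L d W)"
  shows "(\<Sum>s\<in>Rset d m. f s * indicator (layer_event L d W x m s) V) = (f (layer_vec V d x m) :: real)"
proof -
  have "(\<Sum>s\<in>Rset d m. f s * indicator (layer_event L d W x m s) V)
      = (\<Sum>s\<in>Rset d m. if s = layer_vec V d x m then f s else 0)"
    using assms by (intro sum.cong) (auto simp: layer_event_def layer_eq_Rset_iff)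
  then show ?thesis
    using layer_vec_in_Rset[OF assms(1)] finite_Rset by simp
qed

lemma measure_eq_sum_layer_event:
  assumes A: "A \<in> sets (aggr L d W)" and m: "0 < m"
  shows "measure (aggr L d W) A = (\<Sum>s\<in>Rset d m. measure (aggr L d W) (A \<inter> layer_event L d W x m s))"
proof -
  interpret prob_space "aggr L d W" by (rule prob_space_aggr)
  have "A = (\<Union>s\<in>Rset d m. A \<inter> layer_event L d W x m s)"
    using sets.sets_into_space[OF A] layer_vec_in_Rset[OF m]
    by (auto simp: layer_event_def layer_eq_Rset_iff)
  moreover have "disjoint_family_on (\<lambda>s. A \<inter> layer_event L d W x m s) (Rset d m)"
    by (auto simp: disjoint_family_on_def layer_event_def layer_eq_Rset_iff)
  ultimately show ?thesis
    using A by (subst (1) \<open>A = _\<close>, intro measure_finite_Union) (auto simp: finite_Rset)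
qed

text \<open>On input \<open>v\<close>, the sign pattern of layer \<open>k\<close> depends only on the weights of layer \<open>k\<close>,
  hence is independent of any event \<open>Q\<close> about the weights of earlier layers.\<close>
lemma measure_layer_signs_independent:
  fixes Q :: "(nat \<times> nat \<times> nat \<Rightarrow> real) \<Rightarrow> bool" and v s :: "nat \<Rightarrow> real"
  assumes k: "0 < k" "k \<le> L" "0 < d k" and v: "\<exists>j<d (k - 1). v j \<noteq> 0"
    and s: "\<forall>i<d k. s i = -1 \<or> s i = 1"
    and Q: "{w \<in> space (PiM (bam_index (k - 1) d) (gauss_factor (\<lambda>(k, i, j). W k i j))). Q w}
      \<in> sets (PiM (bam_index (k - 1) d) (gauss_factor (\<lambda>(k, i, j). W k i j)))"
  shows "measure (aggr L d W) {V \<in> space (aggr L d W). Q (restrict V (bam_index (k - 1) d))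
           \<and> (\<forall>i<d k. bsgn (\<Sum>j<d (k - 1). V (k, i, j) * v j) = s i)}
     = measure (aggr L d W) {V \<in> space (aggr L d W). Q (restrict V (bam_index (k - 1) d))}
       * (\<Prod>i<d k. 1/2 + s i / 2 * Erf ((\<Sum>j<d (k - 1). W k i j * v j) / sqrt (2 * (\<Sum>j<d (k - 1). (v j)\<^sup>2))))"
proof -
  let ?M = "aggr L d W"
  define T where "T = insert None (Some ` {..<d k})"
  define G where "G t = (case t of None \<Rightarrow> bam_index (k - 1) d | Some i \<Rightarrow> (\<lambda>j. (k, i, j)) ` {..<d (k - 1)})" for t
  define R where "R t w = (case t of None \<Rightarrow> Q w | Some i \<Rightarrow> bsgn (\<Sum>j<d (k - 1). w (k, i, j) * v j) = s i)"
    for t and w :: "nat \<times> nat \<times> nat \<Rightarrow> real"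
  define E where "E t = {V \<in> space ?M. R t (restrict V (G t))}" for t
  have row: "(\<Sum>j<d (k - 1). restrict V (G (Some i)) (k, i, j) * v j) = (\<Sum>j<d (k - 1). V (k, i, j) * v j)" for V i
    by (rule sum.cong) (auto simp: G_def)
  have "measure ?M (\<Inter>t\<in>T. E t) = (\<Prod>t\<in>T. measure ?M (E t))"
    unfolding E_def aggr_eq_PiM_gauss_factor
  proof (rule measure_PiM_Inter_restrict)
    show "bam_index L d \<noteq> {}"
      using k v by (auto simp: bam_index_def)
    show "G t \<subseteq> bam_index L d" if "t \<in> T" for t
      using that k by (auto simp: T_def G_def bam_index_def)
    show "disjoint_family_on G T"
      by (auto simp: disjoint_family_on_def G_def T_def bam_index_def split: option.splits)
    show "{w \<in> space (PiM (G t) (gauss_factor (\<lambda>(k, i, j). W k i j))). R t w}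
        \<in> sets (PiM (G t) (gauss_factor (\<lambda>(k, i, j). W k i j)))" for t
      using Q by (cases t) (simp_all add: R_def G_def)
  qed (auto simp: T_def prob_space_gauss_factor)
  moreover have "(\<Inter>t\<in>T. E t) = {V \<in> space ?M. Q (restrict V (bam_index (k - 1) d))
           \<and> (\<forall>i<d k. bsgn (\<Sum>j<d (k - 1). V (k, i, j) * v j) = s i)}"
    by (auto simp: T_def E_def R_def G_def row)
  moreover have "E None = {V \<in> space ?M. Q (restrict V (bam_index (k - 1) d))}"
    by (simp add: E_def R_def G_def)
  moreover have "measure ?M (E (Some i))
      = 1/2 + s i / 2 * Erf ((\<Sum>j<d (k - 1). W k i j * v j) / sqrt (2 * (\<Sum>j<d (k - 1). (v j)\<^sup>2)))"
    if "i < d k" for i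
  proof -
    have "E (Some i) = {V \<in> space ?M. bsgn (\<Sum>j<d (k - 1). V (k, i, j) * v j) = s i}"
      unfolding E_def R_def option.case row ..
    then show ?thesis
      using measure_PiM_gauss_factor_bsgn_linear_form[where \<mu>="\<lambda>(k, i, j). W k i j"
          and r="\<lambda>j. (k, i, j)" and I="bam_index L d"] k v s that
      by (simp add: aggr_eq_PiM_gauss_factor inj_on_def image_subset_iff bam_index_def)
  qed
  ultimately show ?thesis
    by (simp add: T_def prod.reindex inj_on_def)
qed

lemma measure_layer_event_1:
  assumes "1 \<le> L" "0 < d 1" "\<exists>j<d 0. x j \<noteq> 0" "s \<in> Rset d 1"
  shows "measure (aggr L d W) (layer_event L d W x 1 s) = P1 d W x s"
proof -
  interpret P: prob_space "aggr L d W" by (rule prob_space_aggr)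
  have "layer_event L d W x 1 s = {V \<in> space (aggr L d W). True
      \<and> (\<forall>i<d 1. bsgn (\<Sum>j<d (1 - 1). V (1, i, j) * x j) = s i)}"
    by (simp add: layer_event_def)
  then show ?thesis
    using measure_layer_signs_independent[where k=1 and Q="\<lambda>_. True" and v=x] assms
    by (simp add: Rset_def P1_def vnorm_def real_sqrt_mult P.prob_space)
qed

lemma P1_pos: "s \<in> Rset d 1 \<Longrightarrow> 0 < P1 d W x s"
  unfolding P1_def by (intro prod_pos Erf_affine_pos) (simp add: Rset_def)

lemma sum_P1_eq_1:
  assumes "0 < d 1" "\<exists>j<d 0. x j \<noteq> 0"
  shows "(\<Sum>s\<in>Rset d 1. P1 d W x s) = 1"
proof -
  have "(\<Sum>s\<in>Rset d 1. P1 d W x s) = (\<Sum>s\<in>Rset d 1. measure (aggr 1 d W) (layer_event 1 d W x 1 s))"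
    using assms by (intro sum.cong refl measure_layer_event_1[symmetric]) auto
  also have "\<dots> = measure (aggr 1 d W) (space (aggr 1 d W))"
    using measure_eq_sum_layer_event[of "space (aggr 1 d W)" 1 d W 1 x]
    by (simp add: Int_absorb1 layer_event_def)
  also have "\<dots> = 1"
    by (rule prob_space.prob_space[OF prob_space_aggr])
  finally show ?thesis .
qed

lemma sum_square_Rset:
  assumes "s \<in> Rset d m"
  shows "(\<Sum>j<d m. (s j)\<^sup>2) = real (d m)"
proof -
  have "(\<Sum>j<d m. (s j)\<^sup>2) = (\<Sum>j<d m. 1)"
    by (rule sum.cong) (use assms in \<open>auto simp: Rset_def\<close>)
  then show ?thesis
    by simp
qed

lemma measure_layer_event_Suc:
  assumes m: "0 < m" "Suc m \<le> L" "0 < d m" "0 < d (Suc m)"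
    and sb: "sb \<in> Rset d m" and s: "s \<in> Rset d (Suc m)"
  shows "measure (aggr L d W) (layer_event L d W x 1 s1 \<inter> layer_event L d W x m sb \<inter> layer_event L d W x (Suc m) s)
       = measure (aggr L d W) (layer_event L d W x 1 s1 \<inter> layer_event L d W x m sb) * Psi d W (Suc m) s sb"
proof -
  define Q where "Q w \<longleftrightarrow> (\<forall>i<d 1. layer w d 1 x i = s1 i) \<and> (\<forall>i<d m. layer w d m x i = sb i)"
    for w :: "nat \<times> nat \<times> nat \<Rightarrow> real"
  have Q_restrict: "Q (restrict V (bam_index (Suc m - 1) d)) \<longleftrightarrow> Q V" for V
    using m by (simp add: Q_def layer_restrict_bam_index del: layer.simps)
  have layer_Suc: "layer V d (Suc m) x i = bsgn (\<Sum>j<d (Suc m - 1). V (Suc m, i, j) * sb j)"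
    if "Q V" for V i
  proof -
    have "(\<Sum>j<d m. V (Suc m, i, j) * layer V d m x j) = (\<Sum>j<d m. V (Suc m, i, j) * sb j)"
      by (rule sum.cong) (use that in \<open>simp_all add: Q_def\<close>)
    then show ?thesis
      by simp
  qed
  have E: "layer_event L d W x 1 s1 \<inter> layer_event L d W x m sb
      = {V \<in> space (aggr L d W). Q (restrict V (bam_index (Suc m - 1) d))}"
    unfolding Q_restrict by (auto simp: layer_event_def Q_def)
  moreover have "layer_event L d W x 1 s1 \<inter> layer_event L d W x m sb \<inter> layer_event L d W x (Suc m) s
      = {V \<in> space (aggr L d W). Q (restrict V (bam_index (Suc m - 1) d))
           \<and> (\<forall>i<d (Suc m). bsgn (\<Sum>j<d (Suc m - 1). V (Suc m, i, j) * sb j) = s i)}"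
    unfolding E Q_restrict using layer_Suc by (auto simp: layer_event_def simp del: layer.simps)
  moreover have "{w \<in> space (PiM (bam_index m d) (gauss_factor (\<lambda>(k, i, j). W k i j))). Q w}
      \<in> sets (PiM (bam_index m d) (gauss_factor (\<lambda>(k, i, j). W k i j)))"
    unfolding Q_def by measurable
  moreover have "\<exists>j<d m. sb j \<noteq> 0" "\<forall>i<d (Suc m). s i = -1 \<or> s i = 1"
    using m sb s by (force simp: Rset_def)+
  ultimately show ?thesis
    using measure_layer_signs_independent[where k="Suc m" and Q=Q and v=sb] m
    by (simp add: Psi_def sum_square_Rset[OF sb])
qed

section \<open>The Markov chain of layer outputs\<close>

text \<open>This is \<open>E[hrow (L - m) (F\<^sup>m); F\<^sup>1 = s1]\<close>. It does not depend on \<open>m\<close> because the layer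
  outputs form a Markov chain with transition matrices \<^const>\<open>Psi\<close>.\<close>
definition tail_expectation :: "nat \<Rightarrow> (nat \<Rightarrow> nat) \<Rightarrow> (nat \<Rightarrow> nat \<Rightarrow> nat \<Rightarrow> real) \<Rightarrow> (nat \<Rightarrow> real)
    \<Rightarrow> (nat \<Rightarrow> real) \<Rightarrow> nat \<Rightarrow> real" where
  "tail_expectation L d W x s1 m = (\<Sum>s\<in>Rset d m. hrow d W L (L - m) s
      * measure (aggr L d W) (layer_event L d W x 1 s1 \<inter> layer_event L d W x m s))"

lemma tail_expectation_Suc:
  assumes m: "0 < m" "Suc m \<le> L" "0 < d m" "0 < d (Suc m)"
  shows "tail_expectation L d W x s1 (Suc m) = tail_expectation L d W x s1 m"
proof -
  let ?P = "measure (aggr L d W)" and ?E = "layer_event L d W x"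
  have transition: "?P (?E 1 s1 \<inter> ?E (Suc m) s) = (\<Sum>sb\<in>Rset d m. ?P (?E 1 s1 \<inter> ?E m sb) * Psi d W (Suc m) s sb)"
    if s: "s \<in> Rset d (Suc m)" for s
  proof -
    have "?P (?E 1 s1 \<inter> ?E (Suc m) s) = (\<Sum>sb\<in>Rset d m. ?P (?E 1 s1 \<inter> ?E (Suc m) s \<inter> ?E m sb))"
      using m by (intro measure_eq_sum_layer_event) auto
    also have "\<dots> = (\<Sum>sb\<in>Rset d m. ?P (?E 1 s1 \<inter> ?E m sb \<inter> ?E (Suc m) s))"
      by (simp add: Int_ac)
    also have "\<dots> = (\<Sum>sb\<in>Rset d m. ?P (?E 1 s1 \<inter> ?E m sb) * Psi d W (Suc m) s sb)"
      using m s by (intro sum.cong refl measure_layer_event_Suc)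
    finally show ?thesis .
  qed
  have hrow_step: "hrow d W L (L - m) sb = (\<Sum>s\<in>Rset d (Suc m). hrow d W L (L - Suc m) s * Psi d W (Suc m) s sb)"
    for sb
  proof -
    have "L - m = Suc (L - Suc m)" "L - (L - Suc m) = Suc m"
      using m by auto
    then show ?thesis
      by simp
  qed
  have "tail_expectation L d W x s1 (Suc m) = (\<Sum>s\<in>Rset d (Suc m). hrow d W L (L - Suc m) s
      * (\<Sum>sb\<in>Rset d m. ?P (?E 1 s1 \<inter> ?E m sb) * Psi d W (Suc m) s sb))"
    unfolding tail_expectation_def by (intro sum.cong refl arg_cong2[where f="(*)"] transition)
  also have "\<dots> = (\<Sum>sb\<in>Rset d m. ?P (?E 1 s1 \<inter> ?E m sb)
      * (\<Sum>s\<in>Rset d (Suc m). hrow d W L (L - Suc m) s * Psi d W (Suc m) s sb))"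
    unfolding sum_distrib_left by (subst sum.swap) (simp add: mult_ac)
  also have "\<dots> = tail_expectation L d W x s1 m"
    unfolding tail_expectation_def hrow_step by (simp add: mult.commute)
  finally show ?thesis .
qed

lemma tail_expectation_1:
  assumes "s1 \<in> Rset d 1"
  shows "tail_expectation L d W x s1 1 = hrow d W L (L - 1) s1 * measure (aggr L d W) (layer_event L d W x 1 s1)"
proof -
  have "layer_event L d W x 1 s1 \<inter> layer_event L d W x 1 s = {}" if "s \<in> Rset d 1" "s \<noteq> s1" for s
    using assms that by (auto simp: layer_event_def layer_eq_Rset_iff simp del: layer.simps)
  then have "tail_expectation L d W x s1 1 = (\<Sum>s\<in>Rset d 1. if s = s1
      then hrow d W L (L - 1) s1 * measure (aggr L d W) (layer_event L d W x 1 s1) else 0)"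
    unfolding tail_expectation_def by (intro sum.cong refl) auto
  then show ?thesis
    using assms finite_Rset by simp
qed

lemma tail_expectation_L:
  assumes "0 < L" "d L = 1"
  shows "tail_expectation L d W x s1 L
       = (\<integral>V. bam_out V L d x * indicator (layer_event L d W x 1 s1) V \<partial>aggr L d W)"
proof -
  let ?M = "aggr L d W" and ?E = "layer_event L d W x"
  interpret P: prob_space ?M by (rule prob_space_aggr)
  have "bam_out V L d x * indicator (?E 1 s1) V = (\<Sum>s\<in>Rset d L. s 0 * indicator (?E 1 s1 \<inter> ?E L s) V)"
    if "V \<in> space ?M" for V
  proof -
    have "(\<Sum>s\<in>Rset d L. s 0 * indicator (?E 1 s1 \<inter> ?E L s) V)
        = (\<Sum>s\<in>Rset d L. s 0 * indicator (?E 1 s1) V * indicator (?E L s) V)"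
      by (simp add: indicator_inter_arith mult_ac)
    also have "\<dots> = layer_vec V d x L 0 * indicator (?E 1 s1) V"
      using assms that by (intro sum_Rset_indicator_layer_event) auto
    finally show ?thesis
      using assms by (simp add: layer_vec_def bam_out_def)
  qed
  then have "(\<integral>V. bam_out V L d x * indicator (?E 1 s1) V \<partial>?M)
      = (\<integral>V. (\<Sum>s\<in>Rset d L. s 0 * indicator (?E 1 s1 \<inter> ?E L s) V) \<partial>?M)"
    by (intro Bochner_Integration.integral_cong) auto
  also have "\<dots> = (\<Sum>s\<in>Rset d L. s 0 * measure ?M (?E 1 s1 \<inter> ?E L s))"
    by (subst Bochner_Integration.integral_sum)
       (auto simp: integrable_indicator_iff P.emeasure_finite less_top[symmetric] Int_absorb2
         sets.sets_into_space)
  finally show ?thesis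
    by (simp add: tail_expectation_def)
qed

lemma tail_expectation_eq_1:
  assumes m: "1 \<le> m" "m \<le> L" and d: "\<forall>k\<le>L. 0 < d k"
  shows "tail_expectation L d W x s1 m = tail_expectation L d W x s1 1"
  using m
proof (induction m rule: dec_induct)
  case (step n)
  then show ?case
    using tail_expectation_Suc[of n L d] d by simp
qed simp

lemma abs_bam_out: "0 < L \<Longrightarrow> \<bar>bam_out V L d x\<bar> = 1"
  by (cases L) (simp_all add: bam_out_def bsgn_def)

lemma integrable_bam_out_indicator:
  assumes "0 < L" "A \<in> sets (aggr L d W)"
  shows "integrable (aggr L d W) (\<lambda>V. bam_out V L d x * indicator A V)"
proof -
  interpret P: prob_space "aggr L d W" by (rule prob_space_aggr)
  show ?thesis
  proof (rule P.integrable_const_bound[where B=1])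
    show "AE V in aggr L d W. norm (bam_out V L d x * indicator A V) \<le> 1"
      using assms(1) by (simp add: abs_bam_out abs_mult indicator_def)
    show "(\<lambda>V. bam_out V L d x * indicator A V) \<in> borel_measurable (aggr L d W)"
      using assms(2) unfolding bam_out_def aggr_eq_PiM_gauss_factor by measurable
  qed
qed

lemma abs_integral_bam_out_indicator_le:
  assumes "0 < L" "A \<in> sets (aggr L d W)"
  shows "\<bar>\<integral>V. bam_out V L d x * indicator A V \<partial>aggr L d W\<bar> \<le> measure (aggr L d W) A"
proof -
  have "\<bar>\<integral>V. bam_out V L d x * indicator A V \<partial>aggr L d W\<bar>
      \<le> (\<integral>V. \<bar>bam_out V L d x * indicator A V\<bar> \<partial>aggr L d W)"
    using integral_norm_bound[of "aggr L d W" "\<lambda>V. bam_out V L d x * indicator A V"] by simp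
  also have "\<dots> = (\<integral>V. indicator A V \<partial>aggr L d W)"
    using assms(1) by (simp add: abs_bam_out abs_mult)
  also have "\<dots> = measure (aggr L d W) A"
    using assms(2) by (simp add: Int_absorb2 sets.sets_into_space)
  finally show ?thesis .
qed

lemma integral_bam_out_layer_event_1:
  assumes "0 < L" "\<forall>k\<le>L. 0 < d k" "d L = 1" "\<exists>j<d 0. x j \<noteq> 0" "s \<in> Rset d 1"
  shows "(\<integral>V. bam_out V L d x * indicator (layer_event L d W x 1 s) V \<partial>aggr L d W) = Hvec L d W s * P1 d W x s"
proof -
  have "(\<integral>V. bam_out V L d x * indicator (layer_event L d W x 1 s) V \<partial>aggr L d W)
      = tail_expectation L d W x s L"
    using assms by (simp add: tail_expectation_L)
  also have "\<dots> = tail_expectation L d W x s 1"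
    using assms by (intro tail_expectation_eq_1) auto
  also have "\<dots> = Hvec L d W s * P1 d W x s"
    using tail_expectation_1[of s d L W x] measure_layer_event_1[of L d x s W] assms
    by (simp add: Hvec_def)
  finally show ?thesis .
qed

lemma aggr_out_eq_sum_layer_event_1:
  assumes "0 < L"
  shows "aggr_out L d W x
       = (\<Sum>s\<in>Rset d 1. \<integral>V. bam_out V L d x * indicator (layer_event L d W x 1 s) V \<partial>aggr L d W)"
proof -
  have "aggr_out L d W x = (\<integral>V. (\<Sum>s\<in>Rset d 1. bam_out V L d x * indicator (layer_event L d W x 1 s) V) \<partial>aggr L d W)"
    unfolding aggr_out_def
    by (intro Bochner_Integration.integral_cong refl sum_Rset_indicator_layer_event[symmetric]) simp
  also have "\<dots> = (\<Sum>s\<in>Rset d 1. \<integral>V. bam_out V L d x * indicator (layer_event L d W x 1 s) V \<partial>aggr L d W)"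
    using assms by (intro Bochner_Integration.integral_sum integrable_bam_out_indicator sets_layer_event)
  finally show ?thesis .
qed

lemma abs_Hvec_le_1:
  assumes L: "0 < L" "\<forall>k\<le>L. 0 < d k" "d L = 1" and s: "s \<in> Rset d 1"
  shows "\<bar>Hvec L d W s\<bar> \<le> 1"
proof -
  define x :: "nat \<Rightarrow> real" where "x = (\<lambda>_. 1)"
  have x: "\<exists>j<d 0. x j \<noteq> 0"
    using L by (auto simp: x_def)
  have "\<bar>\<integral>V. bam_out V L d x * indicator (layer_event L d W x 1 s) V \<partial>aggr L d W\<bar>
      \<le> measure (aggr L d W) (layer_event L d W x 1 s)"
    by (rule abs_integral_bam_out_indicator_le[OF L(1) sets_layer_event])
  moreover have "measure (aggr L d W) (layer_event L d W x 1 s) = P1 d W x s"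
    using L by (intro measure_layer_event_1 x s) auto
  ultimately have "\<bar>Hvec L d W s * P1 d W x s\<bar> \<le> P1 d W x s"
    by (simp only: integral_bam_out_layer_event_1[OF L x s])
  then show ?thesis
    using P1_pos[OF s, of W x] by (simp add: abs_mult)
qed

theorem proposition1:
  fixes L :: nat and d :: "nat \<Rightarrow> nat" and W :: "nat \<Rightarrow> nat \<Rightarrow> nat \<Rightarrow> real"
    and x :: "nat \<Rightarrow> real"
  assumes "L \<ge> 2" and "\<forall>k<L. d k > 0" and "d L = 1"
    and "\<exists>j<d 0. x j \<noteq> 0"
  shows "(\<forall>s\<in>Rset d 1. P1 d W x s \<ge> 0) \<and> (\<Sum>s\<in>Rset d 1. P1 d W x s) = 1
       \<and> (\<forall>s\<in>Rset d 1. P1 d W x s =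
            measure (aggr L d W) {V \<in> space (aggr L d W). \<forall>i<d 1. layer V d 1 x i = s i})
       \<and> (\<forall>s\<in>Rset d 1. \<bar>Hvec L d W s\<bar> \<le> 1)
       \<and> (\<forall>s\<in>Rset d 1. Hvec L d W s =
            (\<integral>V. bam_out V L d x * indicator {V \<in> space (aggr L d W). \<forall>i<d 1. layer V d 1 x i = s i} V \<partial>aggr L d W)
            / measure (aggr L d W) {V \<in> space (aggr L d W). \<forall>i<d 1. layer V d 1 x i = s i})
       \<and> aggr_out L d W x = (\<Sum>s\<in>Rset d 1. Hvec L d W s * P1 d W x s)"
proof -
  have L: "0 < L" "\<forall>k\<le>L. 0 < d k"
    using assms(1-3) by (auto simp: le_less)
  have E: "{V \<in> space (aggr L d W). \<forall>i<d 1. layer V d 1 x i = s i} = layer_event L d W x 1 s" for s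
    by (simp add: layer_event_def)
  have P: "measure (aggr L d W) (layer_event L d W x 1 s) = P1 d W x s" if "s \<in> Rset d 1" for s
    using measure_layer_event_1 L assms(4) that by simp
  have H: "(\<integral>V. bam_out V L d x * indicator (layer_event L d W x 1 s) V \<partial>aggr L d W) = Hvec L d W s * P1 d W x s"
    if "s \<in> Rset d 1" for s
    using integral_bam_out_layer_event_1 L assms(3,4) that by blast
  show ?thesis
    unfolding E using P H P1_pos[of _ d W x] sum_P1_eq_1[of d x W] abs_Hvec_le_1[of L d] L assms(3,4)
      aggr_out_eq_sum_layer_event_1[OF L(1)]
    by (simp add: less_imp_le less_imp_neq[THEN not_sym])
qed

end
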